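(* Let $D\ge 2$ and $\eta=\mathrm{diag}(-1,1,\dots,1)$. Let $g_{\mu\nu}$ and $f_{\mu\nu}$ be two real symmetric invertible $D\times D$ matrices of Lorentzian signature $(-,+,\dots,+)$ (the two metrics at a point). Let $L^A{}_\mu$ be any real matrix with $\eta_{AB}L^A{}_\mu L^B{}_\nu=f_{\mu\nu}$, and let $e_A{}^\mu$ be any real matrix with $\eta^{AB}e_A{}^\mu e_B{}^\nu=g^{\mu\nu}$ (where $g^{\mu\nu}$ is the inverse of $g_{\mu\nu}$). Define the matrix $M$ with components $M^{AB}=e^{A\mu}L^B{}_\mu$, where $e^{A\mu}=\eta^{AC}e_C{}^\mu$. Then $g^{-1}f$ has a real square root $\gamma$ of the form $\gamma=f^{-1}s$ with $s$ a real symmetric matrix if and only if the real matrix $\eta M^t\eta M$ has a real square root which can be written as the product of $\eta$ with a real symmetric matrix.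
   Context: Greek indices are space-time indices and capital Latin indices are Lorentz indices, moved with $\eta_{AB}$; repeated indices are summed. $m^t$ denotes transpose; a square root of $A$ is a matrix $\gamma$ with $\gamma^2=A$. The matrix $M$ is invertible. *)

theory Defs
  imports "HOL-Analysis.Analysis"
begin

definition eta :: "'n::finite \<Rightarrow> real^'n^'n" where
  "eta t0 = (\<chi> i j. if i = j then (if i = t0 then -1 else 1) else 0)"

definition symmetric_mat :: "real^'n^'n \<Rightarrow> bool" where
  "symmetric_mat A \<longleftrightarrow> transpose A = A"

text \<open>Lorentzian signature (-,+,...,+): symmetric, invertible, and congruent to eta
  (Sylvester's law of inertia: signature = congruence class).\<close>
definition lorentzian :: "'n::finite \<Rightarrow> real^'n^'n \<Rightarrow> bool" where
  "lorentzian t0 g \<longleftrightarrow> symmetric_mat g \<and> invertible g \<and>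
     (\<exists>P::real^'n^'n. invertible P \<and> transpose P ** g ** P = eta t0)"

end

theory Submission
  imports Defs
begin

text \<open>Conjugation by \<open>P = \<eta> L\<close> carries \<open>g\<^sup>-\<^sup>1 f\<close> to \<open>\<eta> M\<^sup>t \<eta> M\<close>, hence square roots to
  square roots. Since \<open>f = P\<^sup>t \<eta> P\<close>, a root \<open>\<gamma>\<close> has \<open>f \<gamma>\<close> symmetric exactly when its image
  \<open>\<rho> = P \<gamma> P\<^sup>-\<^sup>1\<close> has \<open>\<eta> \<rho> = P\<^sup>-\<^sup>t (f \<gamma>) P\<^sup>-\<^sup>1\<close> symmetric.\<close>

lemma eta_mult_eta: "eta t0 ** eta t0 = mat 1"
proof -
  define d :: "_ \<Rightarrow> real" where "d i = (if i = t0 then -1 else 1)" for i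
  have entries: "eta t0 $ i $ k = (if i = k then d i else 0)" for i k
    by (simp add: eta_def d_def)
  have "d i * d i = 1" for i
    by (simp add: d_def)
  then show ?thesis
    by (simp add: vec_eq_iff matrix_matrix_mult_def mat_def entries if_distrib[of "\<lambda>x. x * _"]
        cong: if_cong)
qed

lemma transpose_eta [simp]: "transpose (eta t0) = eta t0"
  by (auto simp: eta_def transpose_def vec_eq_iff)

lemma matrix_inv:
  fixes A :: "'a::field^'n^'n"
  assumes "invertible A"
  shows matrix_inv_right: "A ** matrix_inv A = mat 1"
    and matrix_inv_left: "matrix_inv A ** A = mat 1"
proof -
  have "\<exists>A'. A ** A' = mat 1 \<and> A' ** A = mat 1"
    using assms invertible_def by blast
  then have "A ** matrix_inv A = mat 1 \<and> matrix_inv A ** A = mat 1"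
    unfolding matrix_inv_def by (rule someI_ex)
  then show "A ** matrix_inv A = mat 1" "matrix_inv A ** A = mat 1"
    by auto
qed

lemma invertible_right_factor:
  fixes A B :: "'a::field^'n^'n"
  assumes "invertible (A ** B)"
  shows "invertible B"
proof -
  obtain C where "C ** (A ** B) = mat 1"
    using assms invertible_left_inverse by blast
  then have "(C ** A) ** B = mat 1"
    by (simp add: matrix_mul_assoc)
  then show ?thesis
    using invertible_left_inverse by blast
qed

lemma symmetric_mat_congruence:
  fixes S Q :: "real^'n^'n"
  assumes "symmetric_mat S"
  shows "symmetric_mat (transpose Q ** S ** Q)"
  using assms by (simp add: symmetric_mat_def matrix_transpose_mul matrix_mul_assoc)

lemma symmetric_mat_congruence_iff:
  fixes S Q :: "real^'n^'n"
  assumes "invertible Q"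
  shows "symmetric_mat (transpose Q ** S ** Q) \<longleftrightarrow> symmetric_mat S"
proof
  define Q' where "Q' = matrix_inv Q"
  have "Q ** Q' = mat 1"
    using assms by (simp add: Q'_def matrix_inv_right)
  moreover have "transpose Q' ** transpose Q = mat 1"
    using calculation by (metis matrix_transpose_mul transpose_mat)
  ultimately have "S = transpose Q' ** (transpose Q ** S ** Q) ** Q'"
    by (metis matrix_mul_assoc matrix_mul_lid matrix_mul_rid)
  then show "symmetric_mat S" if "symmetric_mat (transpose Q ** S ** Q)"
    using symmetric_mat_congruence[OF that] by metis
qed (rule symmetric_mat_congruence)

lemma ex_symmetric_left_factor_iff:
  fixes F F' \<gamma> :: "real^'n^'n"
  assumes "F ** F' = mat 1" "F' ** F = mat 1"
  shows "(\<exists>s. symmetric_mat s \<and> \<gamma> = F' ** s) \<longleftrightarrow> symmetric_mat (F ** \<gamma>)"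
proof
  assume "\<exists>s. symmetric_mat s \<and> \<gamma> = F' ** s"
  then show "symmetric_mat (F ** \<gamma>)"
    by (auto simp: matrix_mul_assoc assms(1))
next
  assume "symmetric_mat (F ** \<gamma>)"
  moreover have "\<gamma> = F' ** (F ** \<gamma>)"
    by (simp add: matrix_mul_assoc assms(2))
  ultimately show "\<exists>s. symmetric_mat s \<and> \<gamma> = F' ** s"
    by blast
qed

lemma ex_sqrt_conjugate_iff:
  fixes P P' A :: "'a::comm_ring_1^'n^'n"
  assumes "P ** P' = mat 1" "P' ** P = mat 1"
  shows "(\<exists>\<gamma>. \<gamma> ** \<gamma> = A \<and> Q \<gamma>) \<longleftrightarrow> (\<exists>\<rho>. \<rho> ** \<rho> = P ** A ** P' \<and> Q (P' ** \<rho> ** P))"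
proof -
  have cancel: "X ** (Y ** Z) = Z" if "X ** Y = mat 1" for X Y Z :: "'a^'n^'n"
    by (simp add: matrix_mul_assoc that)
  note cancel_P = assms cancel[OF assms(1)] cancel[OF assms(2)]
  have conj_sqrt: "(P ** \<gamma> ** P') ** (P ** \<gamma> ** P') = P ** (\<gamma> ** \<gamma>) ** P'" for \<gamma>
    by (simp add: cancel_P flip: matrix_mul_assoc)
  have unconj: "P' ** (P ** \<gamma> ** P') ** P = \<gamma>" and reconj: "P ** (P' ** \<rho> ** P) ** P' = \<rho>"
    for \<gamma> \<rho>
    by (simp_all add: cancel_P flip: matrix_mul_assoc)
  show ?thesis
  proof
    assume "\<exists>\<gamma>. \<gamma> ** \<gamma> = A \<and> Q \<gamma>"
    then obtain \<gamma> where "\<gamma> ** \<gamma> = A" "Q \<gamma>"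
      by blast
    then show "\<exists>\<rho>. \<rho> ** \<rho> = P ** A ** P' \<and> Q (P' ** \<rho> ** P)"
      by (intro exI[of _ "P ** \<gamma> ** P'"]) (simp add: conj_sqrt unconj)
  next
    assume "\<exists>\<rho>. \<rho> ** \<rho> = P ** A ** P' \<and> Q (P' ** \<rho> ** P)"
    then obtain \<rho> where "\<rho> ** \<rho> = P ** A ** P'" "Q (P' ** \<rho> ** P)"
      by blast
    then show "\<exists>\<gamma>. \<gamma> ** \<gamma> = A \<and> Q \<gamma>"
      by (intro exI[of _ "P' ** \<rho> ** P"]) (metis conj_sqrt reconj unconj)
  qed
qed

lemma sandwich_square_eq:
  fixes E e L :: "'a::comm_ring_1^'n^'n"
  assumes "E ** E = mat 1" "transpose E = E"
  shows "E ** transpose (E ** e ** transpose L) ** E ** (E ** e ** transpose L)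
    = E ** L ** (transpose e ** E ** e) ** transpose L"
proof -
  have E_E: "E ** (E ** X) = X" for X :: "'a^'n^'n"
    by (simp add: matrix_mul_assoc assms(1))
  show ?thesis
    by (simp add: matrix_transpose_mul assms(2) E_E flip: matrix_mul_assoc)
qed

lemma ex_sqrt_symmetric_product_iff:
  fixes E L G f :: "real^'n^'n"
  assumes E: "E ** E = mat 1" "transpose E = E"
    and f: "invertible f" "transpose L ** E ** L = f"
  shows "(\<exists>\<gamma>. \<gamma> ** \<gamma> = G ** f \<and> symmetric_mat (f ** \<gamma>))
    \<longleftrightarrow> (\<exists>\<rho>. \<rho> ** \<rho> = E ** L ** G ** transpose L \<and> symmetric_mat (E ** \<rho>))"
proof -
  define P where "P = E ** L"
  define P' where "P' = matrix_inv L ** E"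
  have E_E: "E ** (E ** X) = X" for X :: "real^'n^'n"
    by (simp add: matrix_mul_assoc E(1))
  have "invertible L"
    using f invertible_right_factor by metis
  then have L_inv: "L ** matrix_inv L = mat 1" "matrix_inv L ** L = mat 1"
    by (simp_all add: matrix_inv_right matrix_inv_left)
  then have L_inv_L: "L ** (matrix_inv L ** X) = X" for X :: "real^'n^'n"
    by (simp add: matrix_mul_assoc)
  have PP': "P ** P' = mat 1" "P' ** P = mat 1"
    by (simp_all add: P_def P'_def L_inv L_inv_L E E_E flip: matrix_mul_assoc)
  have P_P': "P ** (P' ** X) = X" for X :: "real^'n^'n"
    by (simp add: matrix_mul_assoc PP')
  have f_P': "f ** P' = transpose L"
    by (simp add: f(2)[symmetric] P'_def L_inv_L E flip: matrix_mul_assoc)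
  have conj_square: "P ** (G ** f) ** P' = E ** L ** G ** transpose L"
    by (simp add: P_def f_P' flip: matrix_mul_assoc)
  have "f = transpose P ** E ** P"
    by (simp add: P_def f(2)[symmetric] matrix_transpose_mul E(2) E_E flip: matrix_mul_assoc)
  then have "f ** (P' ** \<rho> ** P) = transpose P ** (E ** \<rho>) ** P" for \<rho>
    by (simp add: P_P' flip: matrix_mul_assoc)
  moreover have "invertible P"
    using PP' invertible_def by blast
  ultimately have conj_shape: "symmetric_mat (f ** (P' ** \<rho> ** P)) \<longleftrightarrow> symmetric_mat (E ** \<rho>)"
    for \<rho>
    by (simp add: symmetric_mat_congruence_iff)
  show ?thesis
    using ex_sqrt_conjugate_iff[OF PP', of "G ** f" "\<lambda>\<gamma>. symmetric_mat (f ** \<gamma>)"]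
    by (simp only: conj_square conj_shape)
qed

theorem proposition2:
  fixes g f L e :: "real^'n::finite^'n" and t0 :: 'n
  assumes "CARD('n) \<ge> 2"
    and "symmetric_mat g" "invertible g" "lorentzian t0 g"
    and "symmetric_mat f" "invertible f" "lorentzian t0 f"
    and "transpose L ** eta t0 ** L = f"
    and "transpose e ** eta t0 ** e = matrix_inv g"
  shows "(\<exists>\<gamma> s :: real^'n^'n. \<gamma> ** \<gamma> = matrix_inv g ** f \<and> symmetric_mat s
              \<and> \<gamma> = matrix_inv f ** s)
     \<longleftrightarrow> (let M = eta t0 ** e ** transpose L in
          \<exists>\<rho> s :: real^'n^'n. \<rho> ** \<rho> = eta t0 ** transpose M ** eta t0 ** M
              \<and> symmetric_mat s \<and> \<rho> = eta t0 ** s)"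
proof -
  have E: "eta t0 ** eta t0 = mat 1" "transpose (eta t0) = eta t0"
    by (simp_all add: eta_mult_eta)
  have "(\<exists>\<gamma> s. \<gamma> ** \<gamma> = matrix_inv g ** f \<and> symmetric_mat s \<and> \<gamma> = matrix_inv f ** s)
      \<longleftrightarrow> (\<exists>\<gamma>. \<gamma> ** \<gamma> = matrix_inv g ** f \<and> symmetric_mat (f ** \<gamma>))"
    using ex_symmetric_left_factor_iff[OF matrix_inv_right[OF assms(6)] matrix_inv_left[OF assms(6)]]
    by blast
  also have "\<dots> \<longleftrightarrow> (\<exists>\<rho>. \<rho> ** \<rho> = eta t0 ** L ** matrix_inv g ** transpose L
      \<and> symmetric_mat (eta t0 ** \<rho>))"
    using ex_sqrt_symmetric_product_iff[OF E assms(6,8)] .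
  also have "\<dots> \<longleftrightarrow> (let M = eta t0 ** e ** transpose L in
      \<exists>\<rho> s. \<rho> ** \<rho> = eta t0 ** transpose M ** eta t0 ** M \<and> symmetric_mat s \<and> \<rho> = eta t0 ** s)"
    using ex_symmetric_left_factor_iff[OF E(1) E(1)]
    by (simp add: Let_def sandwich_square_eq[OF E] assms(9))
  finally show ?thesis .
qed

end
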